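(* For $\alpha\in\mathbb{K}^\times$ let $A_{4,\alpha}$ be the evolution algebra over the field $\mathbb{K}$ with natural basis $\{e_1,e_2\}$ such that $e_1^2=\alpha e_2$ and $e_2^2=e_1+e_2$. For $\alpha,\alpha'\in\mathbb{K}^\times$, $A_{4,\alpha}$ is isomorphic to $A_{4,\alpha'}$ as a $\mathbb{K}$-algebra if and only if $\alpha=\alpha'$.
   Context: An evolution algebra over $\mathbb{K}$ is a $\mathbb{K}$-algebra with a basis $\{e_i\}$ (natural basis) such that $e_ie_j=0$ for $i\neq j$. *)

theory Defs
  imports Main
begin

text \<open>A two-dimensional K-algebra is represented on coordinate vectors
  (a1, a2) :: 'k \<times> 'k, meaning a1 e1 + a2 e2 for the natural basis {e1, e2}.\<close>

definition vadd :: "'k::field \<times> 'k \<Rightarrow> 'k \<times> 'k \<Rightarrow> 'k \<times> 'k" where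
  "vadd x y = (fst x + fst y, snd x + snd y)"

definition vscale :: "'k::field \<Rightarrow> 'k \<times> 'k \<Rightarrow> 'k \<times> 'k" where
  "vscale c x = (c * fst x, c * snd x)"

text \<open>Multiplication of A_{4,alpha}: e1 e1 = alpha e2, e2 e2 = e1 + e2, e1 e2 = e2 e1 = 0,
  extended bilinearly.\<close>
definition A4_mult :: "'k::field \<Rightarrow> 'k \<times> 'k \<Rightarrow> 'k \<times> 'k \<Rightarrow> 'k \<times> 'k" where
  "A4_mult \<alpha> x y =
     vadd (vscale (fst x * fst y) (0, \<alpha>)) (vscale (snd x * snd y) (1, 1))"

definition alg_iso ::
  "('k::field \<times> 'k \<Rightarrow> 'k \<times> 'k \<Rightarrow> 'k \<times> 'k) \<Rightarrow> ('k \<times> 'k \<Rightarrow> 'k \<times> 'k \<Rightarrow> 'k \<times> 'k)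
    \<Rightarrow> ('k \<times> 'k \<Rightarrow> 'k \<times> 'k) \<Rightarrow> bool" where
  "alg_iso m1 m2 f \<longleftrightarrow> bij f
     \<and> (\<forall>x y. f (vadd x y) = vadd (f x) (f y))
     \<and> (\<forall>c x. f (vscale c x) = vscale c (f x))
     \<and> (\<forall>x y. f (m1 x y) = m2 (f x) (f y))"

definition alg_isomorphic where
  "alg_isomorphic m1 m2 \<longleftrightarrow> (\<exists>f. alg_iso m1 m2 f)"

end

theory Submission
  imports Defs
begin

text \<open>An isomorphism \<open>f\<close> from \<open>A(4,\<alpha>)\<close> to \<open>A(4,\<alpha>')\<close> is determined by
  \<open>f e\<^sub>1 = (a, b)\<close> and \<open>f e\<^sub>2 = (c, d)\<close>, and the structure relations \<open>e\<^sub>1 e\<^sub>2 = 0\<close>,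
  \<open>e\<^sub>1\<^sup>2 = \<alpha> e\<^sub>2\<close>, \<open>e\<^sub>2\<^sup>2 = e\<^sub>1 + e\<^sub>2\<close> become polynomial equations in \<open>a, b, c, d\<close>.
  Their only solution with \<open>f e\<^sub>1 \<noteq> 0\<close> is \<open>a = d = 1\<close>, \<open>b = c = 0\<close>, so \<open>f\<close> is the
  identity, and comparing \<open>e\<^sub>1\<^sup>2\<close> in both algebras gives \<open>\<alpha> = \<alpha>'\<close>.\<close>

lemma A4_mult_Pair [simp]: "A4_mult \<alpha> (a, b) (c, d) = (b * d, a * c * \<alpha> + b * d)"
  by (simp add: A4_mult_def vadd_def vscale_def)

lemma alg_iso_id: "alg_iso m m id"
  by (simp add: alg_iso_def)

lemma alg_isoD:
  assumes "alg_iso m1 m2 f"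
  shows "bij f" and "f (vadd x y) = vadd (f x) (f y)"
    and "f (vscale c x) = vscale c (f x)" and "f (m1 x y) = m2 (f x) (f y)"
  using assms unfolding alg_iso_def by blast+

lemma alg_iso_coordinates:
  assumes "alg_iso m1 m2 f"
  shows "f (x, y) = vadd (vscale x (f (1, 0))) (vscale y (f (0, 1)))"
proof -
  have "(x, y) = vadd (vscale x (1, 0)) (vscale y (0, 1))"
    by (simp add: vadd_def vscale_def)
  then show ?thesis
    by (simp add: alg_isoD [OF assms])
qed

lemma alg_iso_zero:
  assumes "alg_iso m1 m2 f"
  shows "f (0, 0) = (0, 0)"
  using alg_iso_coordinates [OF assms, of 0 0] by (simp add: vadd_def vscale_def)

lemma alg_iso_nonzero:
  assumes "alg_iso m1 m2 f" and "x \<noteq> (0, 0)"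
  shows "f x \<noteq> (0, 0)"
proof
  assume "f x = (0, 0)"
  then have "f x = f (0, 0)"
    using alg_iso_zero [OF assms(1)] by simp
  moreover have "inj f"
    using alg_isoD(1) [OF assms(1)] by (rule bij_is_inj)
  ultimately show False
    using assms(2) by (simp add: inj_eq)
qed

lemma alg_iso_A4_basis_equations:
  assumes f: "alg_iso (A4_mult \<alpha>) (A4_mult \<alpha>') f"
    and e1: "f (1, 0) = (a, b)" and e2: "f (0, 1) = (c, d)"
  shows "(a, b) \<noteq> (0, 0)"
    and "b * d = 0" and "a * c * \<alpha>' + b * d = 0"
    and "b * b = \<alpha> * c" and "a * a * \<alpha>' + b * b = \<alpha> * d"
    and "d * d = a + c" and "c * c * \<alpha>' + d * d = b + d"
proof -
  note mult = alg_isoD(4) [OF f]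
  show "(a, b) \<noteq> (0, 0)"
    using alg_iso_nonzero [OF f, of "(1, 0)"] e1 by simp
  have "f (0, 0) = (0, 0)"
    using alg_iso_zero [OF f] .
  then show "b * d = 0" and "a * c * \<alpha>' + b * d = 0"
    using mult [of "(1, 0)" "(0, 1)"] e1 e2 by simp_all
  have "f (0, \<alpha>) = (\<alpha> * c, \<alpha> * d)"
    using alg_iso_coordinates [OF f, of 0 \<alpha>] e1 e2 by (simp add: vadd_def vscale_def)
  then show "b * b = \<alpha> * c" and "a * a * \<alpha>' + b * b = \<alpha> * d"
    using mult [of "(1, 0)" "(1, 0)"] e1 by simp_all
  have "f (1, 1) = (a + c, b + d)"
    using alg_iso_coordinates [OF f, of 1 1] e1 e2 by (simp add: vadd_def vscale_def)
  then show "d * d = a + c" and "c * c * \<alpha>' + d * d = b + d"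
    using mult [of "(0, 1)" "(0, 1)"] e2 by simp_all
qed

lemma A4_basis_equations_solution:
  fixes \<alpha> \<alpha>' a b c d :: "'k::field"
  assumes "\<alpha>' \<noteq> 0" and nonzero: "(a, b) \<noteq> (0, 0)"
    and bd: "b * d = 0" and acbd: "a * c * \<alpha>' + b * d = 0"
    and bb: "b * b = \<alpha> * c" and aabb: "a * a * \<alpha>' + b * b = \<alpha> * d"
    and dd: "d * d = a + c" and ccdd: "c * c * \<alpha>' + d * d = b + d"
  shows "a = 1 \<and> b = 0 \<and> c = 0 \<and> d = 1"
proof (cases "a = 0")
  case True
  then have "b \<noteq> 0"
    using nonzero by simp
  then have "d = 0"
    using bd by simp
  then have "b * b = 0"
    using aabb \<open>a = 0\<close> by simp
  with \<open>b \<noteq> 0\<close> show ?thesis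
    by simp
next
  case False
  have "a * c = 0"
    using acbd bd \<open>\<alpha>' \<noteq> 0\<close> by simp
  then have "c = 0"
    using False by simp
  then have "b = 0"
    using bb by simp
  have "d \<noteq> 0"
    using dd \<open>c = 0\<close> False by auto
  moreover have "d * d = d"
    using ccdd \<open>b = 0\<close> \<open>c = 0\<close> by simp
  ultimately have "d = 1"
    by simp
  then show ?thesis
    using dd \<open>b = 0\<close> \<open>c = 0\<close> by simp
qed

lemma alg_iso_A4_eq_id:
  assumes f: "alg_iso (A4_mult \<alpha>) (A4_mult \<alpha>') f" and "\<alpha>' \<noteq> 0"
  shows "f = id"
proof -
  obtain a b where e1: "f (1, 0) = (a, b)"
    by (cases "f (1, 0)")
  obtain c d where e2: "f (0, 1) = (c, d)"
    by (cases "f (0, 1)")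
  have "a = 1 \<and> b = 0 \<and> c = 0 \<and> d = 1"
    using A4_basis_equations_solution [OF \<open>\<alpha>' \<noteq> 0\<close>]
      alg_iso_A4_basis_equations [OF f e1 e2] by blast
  then have "f (x, y) = (x, y)" for x y
    using alg_iso_coordinates [OF f, of x y] e1 e2 by (simp add: vadd_def vscale_def)
  then show ?thesis
    by auto
qed

theorem lemma3p5:
  fixes \<alpha> \<alpha>' :: "'k::field"
  assumes "\<alpha> \<noteq> 0" and "\<alpha>' \<noteq> 0"
  shows "alg_isomorphic (A4_mult \<alpha>) (A4_mult \<alpha>') \<longleftrightarrow> \<alpha> = \<alpha>'"
proof
  assume "alg_isomorphic (A4_mult \<alpha>) (A4_mult \<alpha>')"
  then obtain f where f: "alg_iso (A4_mult \<alpha>) (A4_mult \<alpha>') f"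
    unfolding alg_isomorphic_def ..
  then have "f = id"
    using alg_iso_A4_eq_id \<open>\<alpha>' \<noteq> 0\<close> by blast
  then show "\<alpha> = \<alpha>'"
    using alg_isoD(4) [OF f, of "(1, 0)" "(1, 0)"] by simp
next
  assume "\<alpha> = \<alpha>'"
  then show "alg_isomorphic (A4_mult \<alpha>) (A4_mult \<alpha>')"
    unfolding alg_isomorphic_def using alg_iso_id by blast
qed

end
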